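(* There exists a RobMCF instance $(G,u,c,\boldsymbol b)$ with two scenarios and integral capacities (indeed $u\equiv 1$) such that no optimal solution of the continuous relaxation of the RobMCF problem is integral; i.e., the minimum cost over all real-valued robust $\boldsymbol b$-flows is strictly smaller than the minimum cost over all integral robust $\boldsymbol b$-flows.
   Context: A RobMCF instance $(G,u,c,\boldsymbol b)$ consists of a finite directed graph (parallel arcs allowed) $G=(V,A)$ whose arc set is partitioned as $A=A^{\mathrm{fix}}\cup A^{\mathrm{free}}$ into fixed and free arcs, capacities $u:A\to\mathbb Z_{\ge0}$, costs $c:A\to\mathbb Z_{\ge0}$, a finite nonempty set of scenarios $\Lambda$, and for each $\lambda\in\Lambda$ balances $b^\lambda:V\to\mathbb Z$ with $\sum_{v\in V}b^\lambda(v)=0$; $\boldsymbol b=(b^\lambda)_{\lambda\in\Lambda}$. A $b^\lambda$-flow is a function $f^\lambda:A\to\mathbb Z_{\ge0}$ with $f^\lambda(a)\le u(a)$ for all $a\in A$ and $\sum_{a=(v,w)\in A}f^\lambda(a)-\sum_{a=(w,v)\in A}f^\lambda(a)=b^\lambda(v)$ for all $v\in V$ (outflow minus inflow); its cost is $c(f^\lambda)=\sum_{a\in A}c(a)f^\lambda(a)$. A robust $\boldsymbol b$-flow is a tuple $\boldsymbol f=(f^\lambda)_{\lambda\in\Lambda}$ of $b^\lambda$-flows with $f^\lambda(a)=f^{\lambda'}(a)$ for all $a\in A^{\mathrm{fix}}$ and all $\lambda,\lambda'\in\Lambda$ (consistent flow constraints); its cost is $c(\boldsymbol f)=\max_{\lambda\in\Lambda}c(f^\lambda)$.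 The RobMCF problem asks for a robust $\boldsymbol b$-flow of minimum cost (an optimal robust $\boldsymbol b$-flow). The continuous relaxation is the same problem where the flows $f^\lambda$ may take values in $\mathbb R_{\ge 0}$ instead of $\mathbb Z_{\ge0}$. *)

theory Defs
  imports Complex_Main
begin

text \<open>A directed multigraph: vertex set V, arc set A (arcs are abstract names,
  so parallel arcs are allowed), tail and head maps.\<close>

definition robmcf_instance ::
  "nat set \<Rightarrow> nat set \<Rightarrow> nat set \<Rightarrow> (nat \<Rightarrow> nat) \<Rightarrow> (nat \<Rightarrow> nat)
   \<Rightarrow> nat set \<Rightarrow> (nat \<Rightarrow> nat \<Rightarrow> int) \<Rightarrow> bool" where
  "robmcf_instance V A Afix tail head Lam b \<longleftrightarrow>
     finite V \<and> finite A \<and> Afix \<subseteq> A \<and>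
     (\<forall>a\<in>A. tail a \<in> V \<and> head a \<in> V) \<and>
     finite Lam \<and> Lam \<noteq> {} \<and>
     (\<forall>l\<in>Lam. (\<Sum>v\<in>V. b l v) = 0)"

definition is_bflow ::
  "nat set \<Rightarrow> nat set \<Rightarrow> (nat \<Rightarrow> nat) \<Rightarrow> (nat \<Rightarrow> nat) \<Rightarrow> (nat \<Rightarrow> nat)
   \<Rightarrow> (nat \<Rightarrow> int) \<Rightarrow> (nat \<Rightarrow> real) \<Rightarrow> bool" where
  "is_bflow V A tail head u bl f \<longleftrightarrow>
     (\<forall>a\<in>A. 0 \<le> f a \<and> f a \<le> real (u a)) \<and>
     (\<forall>v\<in>V. (\<Sum>a\<in>{a\<in>A. tail a = v}. f a) - (\<Sum>a\<in>{a\<in>A. head a = v}. f a) = real_of_int (bl v))"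

definition is_robust_flow ::
  "nat set \<Rightarrow> nat set \<Rightarrow> nat set \<Rightarrow> (nat \<Rightarrow> nat) \<Rightarrow> (nat \<Rightarrow> nat) \<Rightarrow> (nat \<Rightarrow> nat)
   \<Rightarrow> nat set \<Rightarrow> (nat \<Rightarrow> nat \<Rightarrow> int) \<Rightarrow> (nat \<Rightarrow> nat \<Rightarrow> real) \<Rightarrow> bool" where
  "is_robust_flow V A Afix tail head u Lam b f \<longleftrightarrow>
     (\<forall>l\<in>Lam. is_bflow V A tail head u (b l) (f l)) \<and>
     (\<forall>a\<in>Afix. \<forall>l\<in>Lam. \<forall>l'\<in>Lam. f l a = f l' a)"

definition integral_flow :: "nat set \<Rightarrow> nat set \<Rightarrow> (nat \<Rightarrow> nat \<Rightarrow> real) \<Rightarrow> bool" where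
  "integral_flow A Lam f \<longleftrightarrow> (\<forall>l\<in>Lam. \<forall>a\<in>A. f l a \<in> \<int>)"

definition flow_cost :: "nat set \<Rightarrow> (nat \<Rightarrow> nat) \<Rightarrow> (nat \<Rightarrow> real) \<Rightarrow> real" where
  "flow_cost A c fl = (\<Sum>a\<in>A. real (c a) * fl a)"

definition robust_cost ::
  "nat set \<Rightarrow> (nat \<Rightarrow> nat) \<Rightarrow> nat set \<Rightarrow> (nat \<Rightarrow> nat \<Rightarrow> real) \<Rightarrow> real" where
  "robust_cost A c Lam f = Max ((\<lambda>l. flow_cost A c (f l)) ` Lam)"

end

theory Submission
  imports Defs
begin

text \<open>Take two vertices s = 0 and t = 1, a fixed arc 0 from s to t of cost 0, and two
  free arcs of cost 2: arc 1 from s to t and arc 2 from t to s. Scenario 0 ships one unit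
  from s to t, scenario 1 ships nothing. Half a unit on the fixed arc lets each scenario
  settle the remaining half unit on a free arc, so both scenarios cost 1. An integral
  flow puts 0 or 1 on the fixed arc: with 0, scenario 0 sends a full unit along arc 1;
  with 1, scenario 1 must return a full unit along arc 2. Either way some scenario
  costs 2.\<close>

definition example_tail :: "nat \<Rightarrow> nat" where
  "example_tail a = (if a = 2 then 1 else 0)"

definition example_head :: "nat \<Rightarrow> nat" where
  "example_head a = (if a = 2 then 0 else 1)"

definition example_cost :: "nat \<Rightarrow> nat" where
  "example_cost a = (if a = 0 then 0 else 2)"

definition example_balance :: "nat \<Rightarrow> nat \<Rightarrow> int" where
  "example_balance l v = (if l = 0 then (if v = 0 then 1 else -1) else 0)"

abbreviation example_robust_flow :: "(nat \<Rightarrow> nat \<Rightarrow> real) \<Rightarrow> bool" where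
  "example_robust_flow \<equiv>
     is_robust_flow {0, 1} {0, 1, 2} {0} example_tail example_head (\<lambda>_. 1) {0, 1} example_balance"

abbreviation example_robust_cost :: "(nat \<Rightarrow> nat \<Rightarrow> real) \<Rightarrow> real" where
  "example_robust_cost \<equiv> robust_cost {0, 1, 2} example_cost {0, 1}"

lemma Ints_between_0_1:
  fixes x :: "'a :: linordered_idom"
  shows "x \<in> \<int> \<Longrightarrow> 0 \<le> x \<Longrightarrow> x \<le> 1 \<Longrightarrow> x = 0 \<or> x = 1"
  by (elim Ints_cases) auto

lemma example_instance:
  "robmcf_instance {0, 1} {0, 1, 2} {0} example_tail example_head {0, 1} example_balance"
  unfolding robmcf_instance_def by (auto simp: example_tail_def example_head_def example_balance_def)

lemma example_bflow_iff:
  "is_bflow {0, 1} {0, 1, 2} example_tail example_head (\<lambda>_. 1) bl f \<longleftrightarrow>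
    (\<forall>a\<in>{0, 1, 2}. 0 \<le> f a \<and> f a \<le> 1) \<and>
    f 0 + f 1 - f 2 = real_of_int (bl 0) \<and> f 2 - (f 0 + f 1) = real_of_int (bl 1)"
proof -
  have "{a \<in> {0, 1, 2}. example_tail a = 0} = {0, 1}" "{a \<in> {0, 1, 2}. example_tail a = 1} = {2}"
       "{a \<in> {0, 1, 2}. example_head a = 0} = {2}" "{a \<in> {0, 1, 2}. example_head a = 1} = {0, 1}"
    by (auto simp: example_tail_def example_head_def)
  then show ?thesis
    unfolding is_bflow_def by simp
qed

lemma example_robust_flow_iff:
  "example_robust_flow f \<longleftrightarrow>
    (\<forall>l\<in>{0, 1}. \<forall>a\<in>{0, 1, 2}. 0 \<le> f l a \<and> f l a \<le> 1) \<and>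
    f 0 0 + f 0 1 - f 0 2 = 1 \<and> f 1 0 + f 1 1 - f 1 2 = 0 \<and> f 0 0 = f 1 0"
  unfolding is_robust_flow_def example_bflow_iff by (auto simp: example_balance_def)

lemma example_robust_cost_eq:
  "example_robust_cost f = max (2 * f 0 1 + 2 * f 0 2) (2 * f 1 1 + 2 * f 1 2)"
  by (simp add: robust_cost_def flow_cost_def example_cost_def)

definition half_flow :: "nat \<Rightarrow> nat \<Rightarrow> real" where
  "half_flow l a = (if a = 0 \<or> a = l + 1 then 1 / 2 else 0)"

lemma half_flow_robust: "example_robust_flow half_flow"
  unfolding example_robust_flow_iff by (simp add: half_flow_def)

lemma half_flow_cost: "example_robust_cost half_flow = 1"
  unfolding example_robust_cost_eq by (simp add: half_flow_def)

definition unit_flow :: "nat \<Rightarrow> nat \<Rightarrow> real" where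
  "unit_flow l a = (if l = 0 \<and> a = 1 then 1 else 0)"

lemma unit_flow_robust: "example_robust_flow unit_flow"
  unfolding example_robust_flow_iff by (simp add: unit_flow_def)

lemma unit_flow_integral: "integral_flow {0, 1, 2} {0, 1} unit_flow"
  unfolding integral_flow_def unit_flow_def by auto

lemma integral_robust_cost_ge_2:
  assumes "example_robust_flow g" and "integral_flow {0, 1, 2} {0, 1} g"
  shows "2 \<le> example_robust_cost g"
proof -
  have "g 0 0 = 0 \<or> g 0 0 = 1"
    using assms Ints_between_0_1[of "g 0 0"]
    unfolding example_robust_flow_iff integral_flow_def by simp
  with assms(1) show ?thesis
    unfolding example_robust_flow_iff example_robust_cost_eq by auto
qed

theorem mainTheorem1:
  shows "\<exists>V A Afix tail head u c Lam b.
     robmcf_instance V A Afix tail head Lam b \<and> card Lam = 2 \<and> (\<forall>a\<in>A. u a = 1) \<and>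
     (\<exists>g. is_robust_flow V A Afix tail head u Lam b g \<and> integral_flow A Lam g) \<and>
     (\<exists>f. is_robust_flow V A Afix tail head u Lam b f \<and>
        (\<forall>g. is_robust_flow V A Afix tail head u Lam b g \<and> integral_flow A Lam g \<longrightarrow>
             robust_cost A c Lam f < robust_cost A c Lam g))"
  by (rule exI[of _ "{0, 1}"], rule exI[of _ "{0, 1, 2}"], rule exI[of _ "{0}"],
      rule exI[of _ example_tail], rule exI[of _ example_head], rule exI[of _ "\<lambda>_. 1"],
      rule exI[of _ example_cost], rule exI[of _ "{0, 1}"], rule exI[of _ example_balance],
      use example_instance unit_flow_robust unit_flow_integral half_flow_robust
        half_flow_cost integral_robust_cost_ge_2 in fastforce)

end
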